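(* Fix a Bergman tree $\mathcal{T}_n$ with parameter $\lambda>0$. There exists $\varrho>0$ such that for every $\alpha\in\mathcal{T}_n$ with $\alpha\neq o$, $$\bigcup_{\beta\ge\alpha}K_\beta\subseteq V^{\varrho}_{c_\alpha},\qquad\text{where } V^\varrho_z=\Big\{w\in\mathbb{B}_n:\Big|1-w\cdot\tfrac{z}{|z|}\Big|\le\varrho(1-|z|)\Big\}.$$
   Context: Notation: $\mathbb{B}_n$ is the open unit ball of $\mathbb{C}^n$, $z\cdot w=\sum_j z_j\overline{w_j}$. For $z\in\mathbb{B}_n$, $\varphi_z$ is the involutive automorphism of $\mathbb{B}_n$ interchanging $0$ and $z$; the Bergman metric is $d(z,w)=\frac12\log\frac{1+|\varphi_z(w)|}{1-|\varphi_z(w)|}$, and $D(z,r)=\{w:d(z,w)<r\}$. Bergman tree with parameter $\lambda>0$: for $r>0$ let $S_r=\{z:d(0,z)=r\}$ and for $z\neq0$ let $P_rz$ be the point of $S_r$ on the ray $\{tz:t>0\}$. For each integer $N\ge1$ fix points $z^N_1,\dots,z^N_{J_N}\in S_{\lambda N}$ and a partition of $S_{\lambda N}$ into Borel sets $Q^N_1,\dots,Q^N_{J_N}$ with $B_N(z^N_j,\lambda/2)\subseteq Q^N_j\subseteq B_N(z^N_j,2\lambda)$, where $B_N(z,s)=S_{\lambda N}\cap D(z,s)$. Set $K^N_j=\{z:\lambda N\le d(0,z)<\lambda(N+1),\ P_{\lambda N}z\in Q^N_j\}$ with center $c^N_j=P_{\lambda(N+1/2)}z^N_j$; the root is $K_o=\{z:d(0,z)<\lambda\}$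 with center $0$. $\mathcal{T}_n$ is the index set consisting of $o$ and all pairs $\alpha=(N,j)$; write $K_\alpha$, $c_\alpha$ and $d(\alpha)=N$ (with $d(o)=0$). Tree structure: $(N+1,i)$ is a child of $(N,j)$ (for $N\ge1$) if $P_{\lambda N}c^{N+1}_i\in Q^N_j$, and every $(1,j)$ is a child of $o$. Write $\beta\ge\alpha$ if $\beta$ equals $\alpha$ or is a descendant of $\alpha$. *)

theory Defs
  imports "HOL-Analysis.Analysis"
begin

text \<open>Points of C^n are vectors of type complex^'n (n = CARD('n), arbitrary).\<close>

definition cdot :: "complex^'n \<Rightarrow> complex^'n \<Rightarrow> complex" where
  "cdot z w = (\<Sum>j\<in>UNIV. z $ j * cnj (w $ j))"

definition unit_ball :: "(complex^'n) set" where
  "unit_ball = ball 0 1"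

definition proj_line :: "complex^'n \<Rightarrow> complex^'n \<Rightarrow> complex^'n" where
  "proj_line z w = (if z = 0 then 0 else (cdot w z / cdot z z) *s z)"

text \<open>The involutive automorphism interchanging 0 and z (Rudin's formula).\<close>
definition phi :: "complex^'n \<Rightarrow> complex^'n \<Rightarrow> complex^'n" where
  "phi z w = (1 / (1 - cdot w z)) *s
     (z - proj_line z w - complex_of_real (sqrt (1 - (norm z)\<^sup>2)) *s (w - proj_line z w))"

definition bdist :: "complex^'n \<Rightarrow> complex^'n \<Rightarrow> real" where
  "bdist z w = 1/2 * ln ((1 + norm (phi z w)) / (1 - norm (phi z w)))"

definition bdisc :: "complex^'n \<Rightarrow> real \<Rightarrow> (complex^'n) set" where
  "bdisc z r = {w \<in> unit_ball. bdist z w < r}"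

definition bsphere :: "real \<Rightarrow> (complex^'n) set" where
  "bsphere r = {z \<in> unit_ball. bdist 0 z = r}"

definition rayproj :: "real \<Rightarrow> complex^'n \<Rightarrow> complex^'n" where
  "rayproj r z = (THE w. w \<in> bsphere r \<and> (\<exists>t::real>0. w = complex_of_real t *s z))"

text \<open>Tree indices: None is the root o, Some (N,j) is the pair (N,j).\<close>
type_synonym tidx = "(nat \<times> nat) option"

definition tree_nodes :: "(nat \<Rightarrow> nat) \<Rightarrow> tidx set" where
  "tree_nodes J = insert None {Some (N, j) | N j. 1 \<le> N \<and> 1 \<le> j \<and> j \<le> J N}"

definition bergman_tree_data ::
  "real \<Rightarrow> (nat \<Rightarrow> nat) \<Rightarrow> (nat \<Rightarrow> nat \<Rightarrow> complex^'n) \<Rightarrow> (nat \<Rightarrow> nat \<Rightarrow> (complex^'n) set) \<Rightarrow> bool" where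
  "bergman_tree_data lam J zz Q \<longleftrightarrow> lam > 0 \<and>
     (\<forall>N\<ge>1.
        (\<forall>j\<in>{1..J N}. zz N j \<in> bsphere (lam * real N) \<and> Q N j \<in> sets borel \<and>
            bsphere (lam * real N) \<inter> bdisc (zz N j) (lam / 2) \<subseteq> Q N j \<and>
            Q N j \<subseteq> bsphere (lam * real N) \<inter> bdisc (zz N j) (2 * lam)) \<and>
        (\<Union>j\<in>{1..J N}. Q N j) = bsphere (lam * real N) \<and>
        (\<forall>i\<in>{1..J N}. \<forall>j\<in>{1..J N}. i \<noteq> j \<longrightarrow> Q N i \<inter> Q N j = {}))"

definition tree_box :: "real \<Rightarrow> (nat \<Rightarrow> nat \<Rightarrow> (complex^'n) set) \<Rightarrow> tidx \<Rightarrow> (complex^'n) set" where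
  "tree_box lam Q a = (case a of
      None \<Rightarrow> {z \<in> unit_ball. bdist 0 z < lam}
    | Some (N, j) \<Rightarrow> {z \<in> unit_ball. lam * real N \<le> bdist 0 z \<and> bdist 0 z < lam * (real N + 1) \<and>
                                      rayproj (lam * real N) z \<in> Q N j})"

definition tree_center :: "real \<Rightarrow> (nat \<Rightarrow> nat \<Rightarrow> complex^'n) \<Rightarrow> tidx \<Rightarrow> complex^'n" where
  "tree_center lam zz a = (case a of
      None \<Rightarrow> 0
    | Some (N, j) \<Rightarrow> rayproj (lam * (real N + 1/2)) (zz N j))"

definition is_child ::
  "real \<Rightarrow> (nat \<Rightarrow> nat) \<Rightarrow> (nat \<Rightarrow> nat \<Rightarrow> complex^'n) \<Rightarrow> (nat \<Rightarrow> nat \<Rightarrow> (complex^'n) set) \<Rightarrow> tidx \<Rightarrow> tidx \<Rightarrow> bool" where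
  "is_child lam J zz Q b a \<longleftrightarrow> a \<in> tree_nodes J \<and> b \<in> tree_nodes J \<and>
     (case (a, b) of
        (None, Some (M, i)) \<Rightarrow> M = 1
      | (Some (N, j), Some (M, i)) \<Rightarrow> M = N + 1 \<and> rayproj (lam * real N) (tree_center lam zz b) \<in> Q N j
      | _ \<Rightarrow> False)"

definition tree_ge ::
  "real \<Rightarrow> (nat \<Rightarrow> nat) \<Rightarrow> (nat \<Rightarrow> nat \<Rightarrow> complex^'n) \<Rightarrow> (nat \<Rightarrow> nat \<Rightarrow> (complex^'n) set) \<Rightarrow> tidx \<Rightarrow> tidx \<Rightarrow> bool" where
  "tree_ge lam J zz Q b a \<longleftrightarrow> (\<lambda>x y. is_child lam J zz Q y x)\<^sup>*\<^sup>* a b"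

definition Vregion :: "real \<Rightarrow> complex^'n \<Rightarrow> (complex^'n) set" where
  "Vregion rho z = {w \<in> unit_ball. cmod (1 - cdot w ((1 / complex_of_real (norm z)) *s z)) \<le> rho * (1 - norm z)}"

end

theory Submission
  imports Defs
begin

(* On the unit sphere the quantity sqrt |1 - <x,z>| satisfies the triangle inequality
   (lemma sqrt_gap_triangle), so it can be summed along chains.  Rudin's identity
   1 - |phi_z(w)|^2 = (1-|z|^2)(1-|w|^2)/|1-<w,z>|^2 shows that two points of the
   sphere of radius r at Bergman distance < D have directions whose gap
   |1 - <xi,eta>| is O(1 - r^2).  In a Bergman tree of parameter lam each step from
   a box of level M to a child moves the direction by a gap O(e^{-2 lam M}), so along
   a descending chain the quasi-metric moves by a geometric series
   O(sum_{M>=N} e^{-lam M}) = O(e^{-lam N}); the same holds for the last step into a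
   point of a descendant box.  Hence every point w below the node (N,j) satisfies
   |1 - <w, xi>| <= (1 - |w|) + O(e^{-2 lam N}), which is comparable to 1 - |c_(N,j)|. *)

section \<open>The Hermitian product on C^n\<close>

lemma norm_square_vec: "(norm (x::complex^'n))^2 = (\<Sum>i\<in>UNIV. (cmod (x$i))^2)"
  by (simp add: norm_vec_def L2_set_def sum_nonneg)

lemma cdot_self: "cdot x x = complex_of_real ((norm x)^2)"
proof -
  have "\<And>j. x$j * cnj (x$j) = complex_of_real ((cmod (x$j))^2)"
    by (metis complex_norm_square)
  then show ?thesis by (simp add: norm_square_vec cdot_def of_real_sum)
qed

lemma cdot_Cauchy_Schwarz: "cmod (cdot x y) \<le> norm x * norm y"
proof -
  have "cmod (cdot x y) \<le> (\<Sum>i\<in>UNIV. cmod (x$i * cnj (y$i)))"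
    unfolding cdot_def by (rule norm_sum)
  also have "\<dots> = (\<Sum>i\<in>UNIV. \<bar>cmod (x$i)\<bar> * \<bar>cmod (y$i)\<bar>)" by (simp add: norm_mult)
  also have "\<dots> \<le> L2_set (\<lambda>i. cmod (x$i)) UNIV * L2_set (\<lambda>i. cmod (y$i)) UNIV"
    by (rule L2_set_mult_ineq)
  finally show ?thesis by (simp add: norm_vec_def)
qed

lemma cdot_add1: "cdot (x + y) w = cdot x w + cdot y w"
  by (simp add: cdot_def sum.distrib distrib_right)
lemma cdot_diff1: "cdot (x - y) w = cdot x w - cdot y w"
  by (simp add: cdot_def sum_subtractf left_diff_distrib)
lemma cdot_add2: "cdot w (x + y) = cdot w x + cdot w y"
  by (simp add: cdot_def sum.distrib distrib_left)
lemma cdot_diff2: "cdot w (x - y) = cdot w x - cdot w y"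
  by (simp add: cdot_def sum_subtractf right_diff_distrib)
lemma cdot_smult1: "cdot (c *s x) w = c * cdot x w"
  by (simp add: cdot_def sum_distrib_left mult.assoc)
lemma cdot_smult2: "cdot w (c *s x) = cnj c * cdot w x"
  by (simp add: cdot_def sum_distrib_left mult.assoc mult.left_commute)
lemma cdot_cnj: "cnj (cdot x y) = cdot y x"
  by (simp add: cdot_def mult.commute)

lemma norm_smult: "norm (c *s (x::complex^'n)) = cmod c * norm x"
proof -
  have "complex_of_real ((norm (c *s x))^2) = complex_of_real ((cmod c * norm x)^2)"
    by (simp only: cdot_self[symmetric] cdot_smult1 cdot_smult2)
       (simp add: cdot_self complex_norm_square[symmetric] power_mult_distrib mult.commute
         del: of_real_power)
  then have "(norm (c *s x))^2 = (cmod c * norm x)^2" by (simp only: of_real_eq_iff)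
  then show ?thesis by (simp add: power2_eq_iff_nonneg)
qed

section \<open>Rudin's identity for the automorphism phi_z\<close>

lemma phi_numerator_cdot:
  fixes z w :: "complex^'n" and S Z A W :: complex
  assumes Zne: "Z \<noteq> 0" and SS: "S * S = 1 - Z" and cZ: "cnj Z = Z" and cS: "cnj S = S"
    and zz: "cdot z z = Z" and ww: "cdot w w = W" and wz: "cdot w z = A"
  shows "cdot (z - (A / Z) *s z - S *s (w - (A / Z) *s z))
              (z - (A / Z) *s z - S *s (w - (A / Z) *s z))
         = (1 - A) * (1 - cnj A) - (1 - Z) * (1 - W)"
proof -
  have zw: "cdot z w = cnj A" using wz cdot_cnj by metis
  show ?thesis
    using Zne SS
    by (simp add: cdot_add1 cdot_add2 cdot_diff1 cdot_diff2 cdot_smult1 cdot_smult2 zw zz ww wz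
        complex_cnj_divide cZ cS field_simps) algebra
qed

lemma phi_identity:
  assumes z0: "z \<noteq> 0" and z1: "norm z < 1" and w1: "norm w < 1"
  shows "(norm (phi z w))^2 * (cmod (1 - cdot w z))^2 =
         (cmod (1 - cdot w z))^2 - (1 - (norm z)^2) * (1 - (norm w)^2)"
proof -
  define A where "A = cdot w z"
  define Z where "Z = cdot z z"
  define S where "S = complex_of_real (sqrt (1 - (norm z)^2))"
  define v where "v = z - proj_line z w - S *s (w - proj_line z w)"
  have Zr: "Z = complex_of_real ((norm z)^2)" by (simp add: Z_def cdot_self)
  have SS: "S * S = 1 - Z"
    using z1 by (simp add: S_def Zr abs_square_less_1 less_imp_le flip: of_real_mult)
  have pl: "proj_line z w = (A / Z) *s z" using z0 by (simp add: proj_line_def A_def Z_def)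
  have "cdot v v = (1 - A) * (1 - cnj A) - (1 - Z) * (1 - cdot w w)"
    unfolding v_def pl
    by (rule phi_numerator_cdot) (use z0 SS in \<open>auto simp: cdot_self Zr S_def A_def Z_def\<close>)
  also have "\<dots> = complex_of_real ((cmod (1 - A))^2 - (1 - (norm z)^2) * (1 - (norm w)^2))"
    using complex_norm_square[of "1 - A"] by (simp add: Zr cdot_self complex_cnj_diff)
  finally have nv: "(norm v)^2 = (cmod (1 - A))^2 - (1 - (norm z)^2) * (1 - (norm w)^2)"
    by (simp only: cdot_self of_real_eq_iff)
  have "cmod A \<le> norm w * norm z" unfolding A_def by (rule cdot_Cauchy_Schwarz)
  also have "\<dots> < 1" using z1 w1 mult_strict_mono[of "norm w" 1 "norm z" 1] by simp
  finally have "1 - A \<noteq> 0" by auto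
  moreover have "phi z w = (1 / (1 - A)) *s v" unfolding phi_def v_def A_def S_def by simp
  ultimately show ?thesis
    by (simp add: norm_smult nv A_def[symmetric] power_mult_distrib norm_divide field_simps)
qed

lemma tanh_artanh: assumes "\<bar>x::real\<bar> < 1" shows "tanh (artanh x) = x"
proof -
  have p: "(1+x)/(1-x) > 0" and x1: "1 + x > 0" using assms by (auto simp: abs_less_iff)
  have "exp (- 2 * artanh x) = (1-x)/(1+x)"
    using p assms by (simp add: artanh_def exp_minus exp_ln field_simps)
  then have "tanh (artanh x) = (1 - (1-x)/(1+x)) / (1 + (1-x)/(1+x))"
    by (simp only: tanh_real_altdef)
  also have "\<dots> = x" using x1 by (simp add: field_simps)
  finally show ?thesis .
qed

lemma in_unit_ball: "z \<in> unit_ball \<longleftrightarrow> norm z < 1"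
  by (simp add: unit_ball_def)

lemma bdist_origin: "bdist 0 z = artanh (norm z)"
proof -
  have "phi 0 z = - z" by (simp add: phi_def proj_line_def cdot_def)
  then show ?thesis by (simp add: bdist_def artanh_def)
qed

lemma bsphere_iff: assumes "R > 0" shows "z \<in> bsphere R \<longleftrightarrow> norm z = tanh R"
proof
  assume "z \<in> bsphere R"
  then have "norm z < 1" "artanh (norm z) = R"
    by (auto simp: bsphere_def in_unit_ball bdist_origin)
  then show "norm z = tanh R" using tanh_artanh[of "norm z"] by auto
next
  assume "norm z = tanh R"
  then show "z \<in> bsphere R"
    by (simp add: bsphere_def in_unit_ball bdist_origin artanh_tanh_real tanh_real_lt_1)
qed

lemma rayproj_eq:
  assumes R: "R > 0" and z: "z \<noteq> 0"
  shows "rayproj R z = complex_of_real (tanh R / norm z) *s z"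
  unfolding rayproj_def
proof (rule the_equality)
  show "complex_of_real (tanh R / norm z) *s z \<in> bsphere R \<and>
    (\<exists>t>0. complex_of_real (tanh R / norm z) *s z = complex_of_real t *s z)"
    using R z by (auto simp: bsphere_iff norm_smult norm_divide intro!: exI[of _ "tanh R / norm z"])
next
  fix w assume "w \<in> bsphere R \<and> (\<exists>t>0. w = complex_of_real t *s z)"
  then obtain t where t: "t > 0" "w = complex_of_real t *s z" and "norm w = tanh R"
    using R by (auto simp: bsphere_iff)
  then have "t = tanh R / norm z" using z by (simp add: norm_smult field_simps)
  then show "w = complex_of_real (tanh R / norm z) *s z" using t by simp
qed

section \<open>Directions and the quasi-metric sqrt |1 - <x,z>|\<close>

definition udir :: "complex^'n \<Rightarrow> complex^'n" where
  "udir x = (1 / complex_of_real (norm x)) *s x"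

lemma norm_udir: "x \<noteq> 0 \<Longrightarrow> norm (udir x) = 1"
  by (simp add: udir_def norm_smult norm_divide)

lemma udir_decomp: "x \<noteq> 0 \<Longrightarrow> x = complex_of_real (norm x) *s udir x"
  by (simp add: udir_def vector_smult_assoc)

lemma udir_scale: "t > 0 \<Longrightarrow> udir (complex_of_real t *s x) = udir x"
  by (simp add: udir_def vector_smult_assoc norm_smult)

lemma udir_rayproj: "R > 0 \<Longrightarrow> x \<noteq> 0 \<Longrightarrow> udir (rayproj R x) = udir x"
  by (simp add: rayproj_eq udir_scale del: of_real_divide)

text \<open>Two points of the same Euclidean sphere of radius r at Bergman distance < D satisfy
  |1 - <w,z>| \<le> C_D (1 - r^2); this is where Rudin's identity enters.\<close>
lemma sphere_pair_cdot_bound: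
  assumes zw: "norm z = r" "norm w = r" and r: "0 < r" "r < 1" and d: "bdist z w < D"
  shows "cmod (1 - cdot w z) \<le> (1 - r^2) / sqrt (1 - (tanh D)^2)"
proof -
  define p where "p = norm (phi z w)"
  define A where "A = cmod (1 - cdot w z)"
  have z0: "z \<noteq> 0" using zw r by auto
  have r2: "0 < 1 - r^2" using r by (simp add: abs_square_less_1)
  have e: "(1 - p^2) * A^2 = (1 - r^2)^2"
    using phi_identity[OF z0, of w] zw r by (simp add: p_def A_def algebra_simps power2_eq_square)
  then have "1 - p^2 > 0" using r2 by (smt (verit) mult_nonpos_nonneg zero_le_power2 zero_less_power)
  then have p1: "p < 1" using abs_square_less_1[of p] by (auto simp: p_def)
  have "artanh p < D" using d by (simp add: bdist_def artanh_def p_def)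
  moreover have "\<bar>p\<bar> < 1" using p1 by (simp add: p_def)
  ultimately have pt: "p < tanh D" by (metis tanh_artanh tanh_real_less_iff)
  have "0 \<le> p" by (simp add: p_def)
  then have t: "\<bar>tanh D\<bar> < 1" using pt tanh_real_lt_1[of D] by arith
  have k: "1 - (tanh D)^2 > 0" using t by (simp add: abs_square_less_1)
  have "p^2 \<le> (tanh D)^2" using pt by (simp add: p_def power_mono)
  then have "(1 - (tanh D)^2) * A^2 \<le> (1 - r^2)^2" using e by (simp add: mult_right_mono flip: e)
  then have "A^2 \<le> ((1 - r^2) / sqrt (1 - (tanh D)^2))^2"
    using k by (simp add: power_divide pos_le_divide_eq mult.commute)
  moreover have "0 \<le> (1 - r^2) / sqrt (1 - (tanh D)^2)" using r2 k by simp
  ultimately show ?thesis unfolding A_def using power2_le_imp_le by blast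
qed

lemma sphere_pair_direction_bound:
  assumes zw: "norm z = r" "norm w = r" and r: "0 < r" "r < 1" and d: "bdist z w < D"
  shows "cmod (1 - cdot (udir w) (udir z)) \<le> (1 / sqrt (1 - (tanh D)^2) + 1) * (1 - r^2)"
proof -
  have z0: "z \<noteq> 0" and w0: "w \<noteq> 0" using zw r by auto
  define c where "c = cdot (udir w) (udir z)"
  have r2: "0 \<le> 1 - r^2" using r by (simp add: abs_square_le_1)
  have "cdot w z = cdot (complex_of_real r *s udir w) (complex_of_real r *s udir z)"
    using udir_decomp[OF z0] udir_decomp[OF w0] zw by simp
  then have cw: "cdot w z = complex_of_real (r^2) * c"
    by (simp add: cdot_smult1 cdot_smult2 c_def power2_eq_square)
  have c1: "cmod c \<le> 1"
    using cdot_Cauchy_Schwarz[of "udir w" "udir z"] norm_udir[OF z0] norm_udir[OF w0] by (simp add: c_def)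
  have "1 - c = (1 - complex_of_real (r^2) * c) - complex_of_real (1 - r^2) * c"
    by (simp add: algebra_simps)
  then have "cmod (1 - c) \<le> cmod (1 - cdot w z) + (1 - r^2) * cmod c"
    using norm_triangle_ineq4 r2 by (metis cw norm_mult norm_of_real abs_of_nonneg)
  also have "(1 - r^2) * cmod c \<le> 1 - r^2" using r2 c1 by (simp add: mult_left_le)
  also have "cmod (1 - cdot w z) \<le> (1 - r^2) / sqrt (1 - (tanh D)^2)"
    by (rule sphere_pair_cdot_bound[OF zw r d])
  finally show ?thesis by (simp add: c_def algebra_simps)
qed

text \<open>On the unit sphere, |x - y|^2 = 2 Re (1 - <x,y>) \<le> 2 |1 - <x,y>|.\<close>
lemma unit_dist_sq_le:
  assumes "norm x = 1" "norm y = 1"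
  shows "(norm (x - y))^2 \<le> 2 * cmod (1 - cdot x y)"
proof -
  have "cdot x x = 1" "cdot y y = 1" using assms by (simp_all add: cdot_self)
  then have sq: "complex_of_real ((norm (x - y))^2) = 2 - (cdot x y + cnj (cdot x y))"
    by (simp only: cdot_self[symmetric]) (simp add: cdot_diff1 cdot_diff2 cdot_cnj)
  have "(norm (x - y))^2 = 2 * Re (1 - cdot x y)"
    using arg_cong[OF sq, of Re] by (simp del: of_real_power)
  then show ?thesis using complex_Re_le_cmod[of "1 - cdot x y"] by simp
qed

lemma cdot_gap_sym: "cmod (1 - cdot x y) = cmod (1 - cdot y x)"
  by (metis cdot_cnj complex_cnj_diff complex_cnj_one complex_mod_cnj)

lemma sqrt_gap_triangle:
  assumes x: "norm x = 1" and y: "norm y = 1" and z: "norm z = 1"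
  shows "sqrt (cmod (1 - cdot x z)) \<le> sqrt (cmod (1 - cdot x y)) + sqrt (cmod (1 - cdot y z))"
proof -
  define a where "a = cmod (1 - cdot x y)"
  define b where "b = cmod (1 - cdot y z)"
  have a0: "a \<ge> 0" "b \<ge> 0" by (auto simp: a_def b_def)
  have yy: "cdot y y = 1" using y by (simp add: cdot_self)
  have idt: "1 - cdot x z = (1 - cdot x y) + (1 - cdot y z) - cdot (x - y) (z - y)"
    by (simp add: cdot_diff1 cdot_diff2 yy)
  have "norm (x - y) \<le> sqrt (2 * a)"
    using unit_dist_sq_le[OF x y] by (simp add: a_def real_le_rsqrt)
  moreover have "norm (z - y) \<le> sqrt (2 * b)"
    using unit_dist_sq_le[OF z y] by (simp add: b_def cdot_gap_sym[of z] real_le_rsqrt)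
  ultimately have "norm (x - y) * norm (z - y) \<le> sqrt (2 * a) * sqrt (2 * b)"
    using a0 by (intro mult_mono) auto
  also have "\<dots> = 2 * sqrt a * sqrt b" by (simp add: real_sqrt_mult)
  finally have pr: "norm (x - y) * norm (z - y) \<le> 2 * sqrt a * sqrt b" .
  have "cmod (1 - cdot x z) \<le> a + b + norm (x - y) * norm (z - y)"
    unfolding idt a_def b_def
    using norm_triangle_ineq4[of "(1 - cdot x y) + (1 - cdot y z)" "cdot (x - y) (z - y)"]
      norm_triangle_ineq[of "1 - cdot x y" "1 - cdot y z"] cdot_Cauchy_Schwarz[of "x - y" "z - y"]
    by linarith
  also have "\<dots> \<le> (sqrt a + sqrt b)^2" using pr a0 by (simp add: power2_eq_square algebra_simps)
  finally have "sqrt (cmod (1 - cdot x z)) \<le> sqrt ((sqrt a + sqrt b)^2)" by (rule real_sqrt_le_mono)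
  then show ?thesis using a0 by (simp add: a_def b_def)
qed

lemma cdot_gap_split:
  assumes w0: "w \<noteq> 0" and w1: "norm w \<le> 1"
  shows "cmod (1 - cdot w xi) \<le> (1 - norm w) + cmod (1 - cdot (udir w) xi)"
proof -
  define X where "X = cdot (udir w) xi"
  have "1 - cdot w xi = complex_of_real (1 - norm w) + complex_of_real (norm w) * (1 - X)"
    by (subst udir_decomp[OF w0]) (simp add: cdot_smult1 X_def algebra_simps)
  then have "cmod (1 - cdot w xi)
      \<le> cmod (complex_of_real (1 - norm w)) + cmod (complex_of_real (norm w) * (1 - X))"
    by (metis norm_triangle_ineq)
  also have "\<dots> = (1 - norm w) + norm w * cmod (1 - X)"
    using w1 by (simp only: norm_mult norm_of_real abs_of_nonneg norm_ge_zero diff_ge_0_iff_ge)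
  also have "\<dots> \<le> (1 - norm w) + cmod (1 - X)" using w1 by (simp add: mult_left_le_one_le)
  finally show ?thesis by (simp add: X_def)
qed

lemma one_minus_tanh: "1 - tanh (x::real) = 2 * exp (- 2 * x) / (1 + exp (- 2 * x))"
proof -
  have "1 + exp (- 2 * x) > 0" by (simp add: add_pos_pos)
  then show ?thesis by (simp only: tanh_real_altdef) (simp add: field_simps)
qed

lemma tanh_gap_upper: "1 - tanh (x::real) \<le> 2 * exp (- 2 * x)"
  unfolding one_minus_tanh by (simp add: divide_le_eq add_pos_pos)

lemma tanh_gap_lower: assumes "(x::real) \<ge> 0" shows "exp (- 2 * x) \<le> 1 - tanh x"
proof -
  have "exp (- 2 * x) \<le> 1" using assms by simp
  then show ?thesis unfolding one_minus_tanh by (simp add: le_divide_eq add_pos_pos)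
qed

lemma tanh_sq_gap: assumes "(x::real) \<ge> 0" shows "1 - (tanh x)^2 \<le> 4 * exp (- 2 * x)"
proof -
  have t: "tanh x \<ge> 0" "tanh x < 1" using assms tanh_real_lt_1 by auto
  have "1 - (tanh x)^2 = (1 - tanh x) * (1 + tanh x)" by (simp add: power2_eq_square algebra_simps)
  also have "\<dots> \<le> (2 * exp (- 2 * x)) * 2"
    using t tanh_gap_upper[of x] by (intro mult_mono) auto
  finally show ?thesis by simp
qed

section \<open>The Bergman tree\<close>

lemma tree_nodes_Some: "Some (N, j) \<in> tree_nodes J \<longleftrightarrow> 1 \<le> N \<and> 1 \<le> j \<and> j \<le> J N"
  by (auto simp: tree_nodes_def)

context
  fixes lam :: real and J :: "nat \<Rightarrow> nat"
    and zz :: "nat \<Rightarrow> nat \<Rightarrow> complex^'n"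
    and Q :: "nat \<Rightarrow> nat \<Rightarrow> (complex^'n) set"
  assumes bt: "bergman_tree_data lam J zz Q"
begin

lemma lam_pos: "lam > 0" using bt by (simp add: bergman_tree_data_def)

lemma node_facts:
  assumes "Some (N, j) \<in> tree_nodes J"
  shows "N \<ge> 1" "norm (zz N j) = tanh (lam * real N)" "zz N j \<noteq> 0"
    "Q N j \<subseteq> bsphere (lam * real N) \<inter> bdisc (zz N j) (2 * lam)"
proof -
  have N: "N \<ge> 1" "j \<in> {1..J N}" using assms by (auto simp: tree_nodes_Some)
  then show "N \<ge> 1" by simp
  have lN: "lam * real N > 0" using lam_pos N by simp
  from bt N have zs: "zz N j \<in> bsphere (lam * real N)"
    and Qs: "Q N j \<subseteq> bsphere (lam * real N) \<inter> bdisc (zz N j) (2 * lam)"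
    unfolding bergman_tree_data_def by blast+
  show "norm (zz N j) = tanh (lam * real N)" using bsphere_iff[OF lN, of "zz N j"] zs by blast
  then show "zz N j \<noteq> 0" using lN by auto
  show "Q N j \<subseteq> bsphere (lam * real N) \<inter> bdisc (zz N j) (2 * lam)" by fact
qed

lemma node_udir_unit: "Some (N, j) \<in> tree_nodes J \<Longrightarrow> norm (udir (zz N j)) = 1"
  using node_facts(3) by (simp add: norm_udir)

lemma center_facts:
  assumes "Some (N, j) \<in> tree_nodes J"
  shows "norm (tree_center lam zz (Some (N, j))) = tanh (lam * (real N + 1/2))"
    "udir (tree_center lam zz (Some (N, j))) = udir (zz N j)"
proof -
  have l2: "lam * (real N + 1/2) > 0" using lam_pos by simp
  have z0: "zz N j \<noteq> 0" using node_facts[OF assms] by simp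
  show "norm (tree_center lam zz (Some (N, j))) = tanh (lam * (real N + 1/2))"
    using l2 z0 by (simp add: tree_center_def rayproj_eq norm_smult norm_divide)
  show "udir (tree_center lam zz (Some (N, j))) = udir (zz N j)"
    using l2 z0 by (simp add: tree_center_def udir_rayproj)
qed

definition dir_const :: real where
  "dir_const = 1 / sqrt (1 - (tanh (2 * lam))^2) + 1"

lemma dir_const_ge: "dir_const \<ge> 1"
proof -
  have "\<bar>tanh (2*lam)\<bar> < 1" using tanh_real_lt_1 tanh_real_gt_neg1 by (simp add: abs_less_iff)
  then have "(tanh (2*lam))^2 < 1" using abs_square_less_1 by blast
  then show ?thesis unfolding dir_const_def by simp
qed

text \<open>Every point of Q_(N,j) has a direction within gap dir_const (1 - tanh^2 (lam N)) of
  that of z_(N,j), since Q_(N,j) lies in the Bergman disc of radius 2 lam about z_(N,j).\<close>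
lemma in_Q_direction_bound:
  assumes a: "Some (N, j) \<in> tree_nodes J" and p: "p \<in> Q N j"
  shows "cmod (1 - cdot (udir p) (udir (zz N j))) \<le> dir_const * (1 - (tanh (lam * real N))^2)"
proof -
  note nf = node_facts[OF a]
  have lN: "lam * real N > 0" using lam_pos nf(1) by simp
  have "p \<in> bsphere (lam * real N)" "p \<in> bdisc (zz N j) (2 * lam)" using nf(4) p by auto
  then have np: "norm p = tanh (lam * real N)" and d: "bdist (zz N j) p < 2 * lam"
    using bsphere_iff[OF lN] by (auto simp: bdisc_def)
  show ?thesis unfolding dir_const_def
    by (rule sphere_pair_direction_bound[OF nf(2) np]) (use lN tanh_real_lt_1 d in auto)
qed

text \<open>The same bound for a child (N+1,i) of (N,j): its direction projects into Q_(N,j).\<close>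
lemma child_direction_bound:
  assumes a: "Some (N, j) \<in> tree_nodes J" and c: "Some (N + 1, i) \<in> tree_nodes J"
    and ch: "rayproj (lam * real N) (tree_center lam zz (Some (N + 1, i))) \<in> Q N j"
  shows "cmod (1 - cdot (udir (zz (N+1) i)) (udir (zz N j)))
           \<le> dir_const * (1 - (tanh (lam * real N))^2)"
proof -
  have lN: "lam * real N > 0" using lam_pos node_facts(1)[OF a] by simp
  have c0: "tree_center lam zz (Some (N + 1, i)) \<noteq> 0"
    using center_facts(1)[OF c] lam_pos by auto
  have "udir (rayproj (lam * real N) (tree_center lam zz (Some (N + 1, i))))
        = udir (tree_center lam zz (Some (N + 1, i)))" by (rule udir_rayproj[OF lN c0])
  also have "\<dots> = udir (zz (N+1) i)" by (rule center_facts(2)[OF c])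
  finally show ?thesis using in_Q_direction_bound[OF a ch] by simp
qed

lemma box_facts:
  assumes a: "Some (M, i) \<in> tree_nodes J" and w: "w \<in> tree_box lam Q (Some (M, i))"
  shows "w \<noteq> 0" "norm w < 1" "tanh (lam * real M) \<le> norm w"
    "cmod (1 - cdot (udir w) (udir (zz M i))) \<le> dir_const * (1 - (tanh (lam * real M))^2)"
proof -
  have lM: "lam * real M > 0" using lam_pos node_facts(1)[OF a] by simp
  have w1: "norm w < 1" and b: "lam * real M \<le> artanh (norm w)"
    and pq: "rayproj (lam * real M) w \<in> Q M i"
    using w by (auto simp: tree_box_def in_unit_ball bdist_origin)
  show "norm w < 1" by fact
  have "tanh (lam * real M) \<le> tanh (artanh (norm w))" using b by simp
  then show tw: "tanh (lam * real M) \<le> norm w" using tanh_artanh[of "norm w"] w1 by simp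
  then show w0: "w \<noteq> 0" using lM by (smt (verit) norm_zero tanh_real_pos_iff)
  show "cmod (1 - cdot (udir w) (udir (zz M i))) \<le> dir_const * (1 - (tanh (lam * real M))^2)"
    using in_Q_direction_bound[OF a pq] udir_rayproj[OF lM w0] by simp
qed

definition ratio :: real where "ratio = exp (- lam)"
definition step_const :: real where "step_const = 2 * sqrt dir_const"

lemma ratio_bounds: "ratio > 0" "ratio < 1" using lam_pos by (auto simp: ratio_def)

lemma exp_ratio: "exp (- 2 * (lam * real N)) = (ratio ^ N)^2"
  by (simp add: ratio_def power2_eq_square flip: exp_of_nat_mult exp_add)

lemma level_step_bound:
  "sqrt (dir_const * (1 - (tanh (lam * real N))^2)) \<le> step_const * ratio ^ N"
proof -
  have "1 - (tanh (lam * real N))^2 \<le> 4 * (ratio ^ N)^2"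
    using tanh_sq_gap[of "lam * real N"] lam_pos unfolding exp_ratio by simp
  then have "dir_const * (1 - (tanh (lam * real N))^2) \<le> (step_const * ratio ^ N)^2"
    using dir_const_ge by (simp add: step_const_def power_mult_distrib mult_left_mono)
  then show ?thesis
    using ratio_bounds dir_const_ge real_sqrt_le_mono[of _ "(step_const * ratio ^ N)^2"]
    by (simp add: step_const_def)
qed

lemma descendant_chain:
  assumes ge: "tree_ge lam J zz Q b a" and aS: "a = Some (N, j)" and an: "a \<in> tree_nodes J"
  shows "\<exists>M i. b = Some (M, i) \<and> b \<in> tree_nodes J \<and> N \<le> M \<and>
     sqrt (cmod (1 - cdot (udir (zz M i)) (udir (zz N j))))
       \<le> step_const * (ratio ^ N - ratio ^ M) / (1 - ratio)"
  using ge[unfolded tree_ge_def]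
proof (induction rule: rtranclp_induct)
  case base
  have "cdot (udir (zz N j)) (udir (zz N j)) = 1"
    using node_udir_unit[OF an[unfolded aS]] by (simp add: cdot_self)
  then show ?case using aS an by auto
next
  case (step b c)
  from step.IH obtain M i where b: "b = Some (M, i)" "b \<in> tree_nodes J" "N \<le> M"
    and ih: "sqrt (cmod (1 - cdot (udir (zz M i)) (udir (zz N j))))
               \<le> step_const * (ratio ^ N - ratio ^ M) / (1 - ratio)"
    by blast
  obtain i' where c: "c = Some (M + 1, i')" "c \<in> tree_nodes J"
    and ch: "rayproj (lam * real M) (tree_center lam zz (Some (M + 1, i'))) \<in> Q M i"
    using step.hyps(2) unfolding is_child_def b(1) by (cases c) auto
  have cb: "sqrt (cmod (1 - cdot (udir (zz (M+1) i')) (udir (zz M i)))) \<le> step_const * ratio ^ M"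
    using child_direction_bound[OF b(2)[unfolded b(1)] c(2)[unfolded c(1)] ch]
      real_sqrt_le_mono level_step_bound order_trans by blast
  have "sqrt (cmod (1 - cdot (udir (zz (M+1) i')) (udir (zz N j))))
        \<le> step_const * ratio ^ M + step_const * (ratio ^ N - ratio ^ M) / (1 - ratio)"
    using sqrt_gap_triangle[OF node_udir_unit node_udir_unit node_udir_unit] c b an aS cb ih by fastforce
  also have "\<dots> = step_const * (ratio ^ N - ratio ^ (M+1)) / (1 - ratio)"
    using ratio_bounds by (simp add: field_simps)
  finally show ?case using c b by auto
qed

lemma descendant_box_direction:
  assumes an: "Some (N, j) \<in> tree_nodes J" and bn: "b \<in> tree_nodes J"
    and ge: "tree_ge lam J zz Q b (Some (N, j))" and wb: "w \<in> tree_box lam Q b"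
  shows "w \<noteq> 0" "norm w < 1" "tanh (lam * real N) \<le> norm w"
    "cmod (1 - cdot (udir w) (udir (zz N j))) \<le> (step_const / (1 - ratio))^2 * (ratio ^ N)^2"
proof -
  obtain M i where bS: "b = Some (M, i)" and MN: "N \<le> M"
    and ch: "sqrt (cmod (1 - cdot (udir (zz M i)) (udir (zz N j))))
               \<le> step_const * (ratio ^ N - ratio ^ M) / (1 - ratio)"
    using descendant_chain[OF ge refl an] by blast
  note bb = box_facts[OF bn[unfolded bS] wb[unfolded bS]]
  show "w \<noteq> 0" "norm w < 1" using bb by auto
  show "tanh (lam * real N) \<le> norm w"
    using bb(3) MN lam_pos by (smt (verit) mult_left_mono of_nat_mono tanh_real_le_iff)
  have "sqrt (cmod (1 - cdot (udir w) (udir (zz M i)))) \<le> step_const * ratio ^ M"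
    using real_sqrt_le_mono[OF bb(4)] level_step_bound[of M] by linarith
  then have "sqrt (cmod (1 - cdot (udir w) (udir (zz N j))))
        \<le> step_const * ratio ^ M + step_const * (ratio ^ N - ratio ^ M) / (1 - ratio)"
    using sqrt_gap_triangle[OF norm_udir[OF bb(1)] node_udir_unit node_udir_unit] bn an ch bS by fastforce
  also have "\<dots> \<le> step_const * ratio ^ N / (1 - ratio)"
    using ratio_bounds dir_const_ge by (simp add: field_simps step_const_def)
  finally have "sqrt (cmod (1 - cdot (udir w) (udir (zz N j)))) \<le> step_const * ratio ^ N / (1 - ratio)" .
  then show "cmod (1 - cdot (udir w) (udir (zz N j))) \<le> (step_const / (1 - ratio))^2 * (ratio ^ N)^2"
    using power_mono[of _ _ 2] by (fastforce simp: power_divide power_mult_distrib)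
qed

lemma radial_gaps:
  "1 - tanh (lam * real N) \<le> 2 * (ratio ^ N)^2"
  "(ratio ^ N)^2 * ratio \<le> 1 - tanh (lam * (real N + 1/2))"
proof -
  show "1 - tanh (lam * real N) \<le> 2 * (ratio ^ N)^2"
    using tanh_gap_upper[of "lam * real N"] unfolding exp_ratio .
  have "exp (- 2 * (lam * (real N + 1/2))) = exp (- 2 * (lam * real N)) * exp (- lam)"
    by (simp add: algebra_simps flip: exp_add)
  then have "exp (- 2 * (lam * (real N + 1/2))) = (ratio ^ N)^2 * ratio"
    unfolding exp_ratio by (simp add: ratio_def)
  then show "(ratio ^ N)^2 * ratio \<le> 1 - tanh (lam * (real N + 1/2))"
    using tanh_gap_lower[of "lam * (real N + 1/2)"] lam_pos by simp
qed

end

text \<open>Lemma 2.4: the union of the boxes below a non-root node lies in the region V^rho of its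
  centre, with rho = (2 + (step_const / (1 - ratio))^2) / ratio.\<close>
theorem lemma2p4:
  fixes lam :: real and J :: "nat \<Rightarrow> nat"
    and zz :: "nat \<Rightarrow> nat \<Rightarrow> complex^'n"
    and Q :: "nat \<Rightarrow> nat \<Rightarrow> (complex^'n) set"
  assumes "bergman_tree_data lam J zz Q"
  shows "\<exists>rho>0. \<forall>a\<in>tree_nodes J. a \<noteq> None \<longrightarrow>
           (\<Union>b\<in>{b \<in> tree_nodes J. tree_ge lam J zz Q b a}. tree_box lam Q b)
             \<subseteq> Vregion rho (tree_center lam zz a)"
proof (intro exI conjI ballI impI subsetI)
  define q where "q = ratio lam"
  define C where "C = 2 + (step_const lam / (1 - q))^2"
  note q = ratio_bounds[OF assms, folded q_def]
  show rho_pos: "C / q > 0" using q by (simp add: C_def add_pos_nonneg)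
  fix a w
  assume an: "a \<in> tree_nodes J" and "a \<noteq> None"
    and "w \<in> (\<Union>b\<in>{b \<in> tree_nodes J. tree_ge lam J zz Q b a}. tree_box lam Q b)"
  moreover obtain N j where aS: "a = Some (N, j)" using \<open>a \<noteq> None\<close> by auto
  ultimately obtain b where b: "b \<in> tree_nodes J"
    "tree_ge lam J zz Q b (Some (N, j))" "w \<in> tree_box lam Q b" by blast
  note wd = descendant_box_direction[OF assms an[unfolded aS] b, folded q_def]
  note c = center_facts[OF assms an[unfolded aS]]
  note g = radial_gaps[OF assms, of N, folded q_def]
  have "cmod (1 - cdot w (udir (zz N j))) \<le> (1 - norm w) + (C - 2) * (q ^ N)^2"
    using cdot_gap_split[OF wd(1) less_imp_le[OF wd(2)], of "udir (zz N j)"] wd(4)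
    by (simp add: C_def)
  also have "\<dots> \<le> C * (q ^ N)^2" using wd(3) g(1) by (simp add: C_def algebra_simps)
  also have "\<dots> = C / q * ((q ^ N)^2 * q)" using q by simp
  also have "\<dots> \<le> C / q * (1 - norm (tree_center lam zz a))"
    unfolding aS c(1) using rho_pos by (intro mult_left_mono[OF g(2)]) simp
  finally show "w \<in> Vregion (C / q) (tree_center lam zz a)"
    using wd(2) c(2) by (simp add: Vregion_def in_unit_ball aS udir_def)
qed

end
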